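(* Assume $0<|\mathscr{C}|\leq\tfrac12$. Then for $z\in\mathbb{U}$ (except at points where $d_{-1}(z)$ or $d_1(z)$ vanishes) the characteristic equation $d_{-1}(z)\kappa^{-1}+d_0(z)+d_1(z)\kappa=0$ of the fourth-order D1Q3 scheme has two roots, one stable root $\kappa_s(z)\in\mathbb{D}$ and one unstable root $\kappa_u(z)\in\mathbb{U}$. They extend to $z\in\mathbb{S}$ (extensions still denoted $\kappa_s,\kappa_u$), and $$\kappa_s(1)=\begin{cases}-1,&\mathscr{C}<0,\\1,&\mathscr{C}>0,\end{cases}\qquad \kappa_u(1)=\begin{cases}1,&\mathscr{C}<0,\\-1,&\mathscr{C}>0,\end{cases}\qquad \kappa_s(-1)=\kappa_u(-1)=1.$$
   Context: $\mathbb{D}=\{|z|<1\}$, $\mathbb{S}=\{|z|=1\}$, $\mathbb{U}=\{|z|>1\}$. Fourth-order D1Q3 scheme: $q=3$, velocities $c_1=0$, $c_2=1$, $c_3=-1$, $M=\begin{pmatrix}1&1&1\\0&1&-1\\0&1&1\end{pmatrix}$, equilibrium $\epsilon=(1,\mathscr{C},\tfrac13(1+2\mathscr{C}^2))$, $s_2=s_3=2$, $K:=I_3+\mathrm{diag}(s_1,2,2)(\epsilon e_1^{\mathsf T}-I_3)$ ($s_1$ arbitrary), $\hat E(\kappa):=M\mathrm{diag}(1,\kappa^{-1},\kappa)M^{-1}K$. Characteristic equation: $\det(zI_3-\hat E(\kappa))=d_{-1}(z)\kappa^{-1}+d_0(z)+d_1(z)\kappa$, where explicitly $d_{-1}(z)=-\tfrac13(2\mathscr{C}^2+3\mathscr{C}-2)z^2+\tfrac13(2\mathscr{C}^2-3\mathscr{C}-2)z$,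 $d_0(z)=z^3+\tfrac13(4\mathscr{C}^2-1)z^2-\tfrac13(4\mathscr{C}^2-1)z-1$, $d_1(z)=-\tfrac13(2\mathscr{C}^2-3\mathscr{C}-2)z^2+\tfrac13(2\mathscr{C}^2+3\mathscr{C}-2)z$. *)

theory Defs
  imports "HOL-Analysis.Analysis"
begin

text \<open>Coefficients of the characteristic equation
  det(z I - E(kappa)) = d_m1 z / kappa + d_0 z + d_1 z * kappa
  of the fourth-order D1Q3 scheme, with Courant number C (real).\<close>

definition d_m1 :: "real \<Rightarrow> complex \<Rightarrow> complex" where
  "d_m1 C z = - (of_real ((2*C^2 + 3*C - 2)/3)) * z^2 + of_real ((2*C^2 - 3*C - 2)/3) * z"

definition d_0 :: "real \<Rightarrow> complex \<Rightarrow> complex" where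
  "d_0 C z = z^3 + of_real ((4*C^2 - 1)/3) * z^2 - of_real ((4*C^2 - 1)/3) * z - 1"

definition d_1 :: "real \<Rightarrow> complex \<Rightarrow> complex" where
  "d_1 C z = - (of_real ((2*C^2 - 3*C - 2)/3)) * z^2 + of_real ((2*C^2 + 3*C - 2)/3) * z"

definition char_root :: "real \<Rightarrow> complex \<Rightarrow> complex \<Rightarrow> bool" where
  "char_root C z \<kappa> \<longleftrightarrow> \<kappa> \<noteq> 0 \<and> d_m1 C z * inverse \<kappa> + d_0 C z + d_1 C z * \<kappa> = 0"

end

theory Submission
  imports Defs
begin

text \<open>Viewed as a quadratic in \<open>\<kappa>\<close>, the characteristic equation has discriminant
  \<open>d_0\<^sup>2 - 4 d_1 d_m1 = (z + 1)\<^sup>2 (z\<^sup>2 - t\<^sub>+ z + 1) (z\<^sup>2 - t\<^sub>- z + 1)\<close> with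
  \<open>0 \<le> t\<^sub>- \<le> t\<^sub>+ \<le> 2\<close>. Both quadratic factors have their roots on the unit circle, so
  the discriminant has a continuous square root on \<open>cmod z \<ge> 1\<close>, built from principal
  square roots, and the quadratic formula gives continuous roots \<open>kappa_s\<close>, \<open>kappa_u\<close>.
  For \<open>cmod z > 1\<close> no root is unimodular: divided by \<open>(z + 1) (z + 1/\<kappa>) (z + \<kappa>)\<close>,
  the characteristic function of a unimodular \<open>\<kappa>\<close> is a combination, with nonnegative
  weights when \<open>\<bar>C\<bar> \<le> 1/2\<close>, of quotients \<open>(z - d) / (z + d)\<close> with \<open>cmod d = 1\<close>,
  which have positive real part. As the exterior of the unit disc minus the finitely many
  zeros of \<open>d_1\<close>, \<open>d_m1\<close> is connected, \<open>cmod kappa_s < 1 < cmod kappa_u\<close> holds there as soon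
  as it holds at one large real \<open>z\<close>, where both roots are real and \<open>d_0\<close> dominates
  \<open>d_1\<close> and \<open>d_m1\<close>.\<close>

lemma quadratic_roots_inverse_form:
  fixes a b c g :: "'a::field_char_0"
  assumes "a \<noteq> 0" "c \<noteq> 0" "g\<^sup>2 = b\<^sup>2 - 4*a*c"
  shows "{k. k \<noteq> 0 \<and> c * inverse k + b + a * k = 0} = {(-b + g) / (2*a), (-b - g) / (2*a)}"
proof -
  define r1 where "r1 = (-b + g) / (2*a)"
  define r2 where "r2 = (-b - g) / (2*a)"
  have factor: "a * (k - r1) * (k - r2) = a*k\<^sup>2 + b*k + c" for k
  proof -
    have "a * (k - r1) * (k - r2) = a*k\<^sup>2 + b*k + (b\<^sup>2 - g\<^sup>2) / (4*a)"
      using assms(1) unfolding r1_def r2_def by (simp add: field_simps power2_eq_square)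
    then show ?thesis
      using assms(1,3) by simp
  qed
  have roots: "c * inverse k + b + a * k = 0 \<longleftrightarrow> k = r1 \<or> k = r2" if "k \<noteq> 0" for k
  proof -
    have "c * inverse k + b + a * k = a * (k - r1) * (k - r2) / k"
      using that unfolding factor by (simp add: field_simps power2_eq_square)
    then show ?thesis
      using assms(1) that by simp
  qed
  have "r1 \<noteq> 0" "r2 \<noteq> 0"
    using factor[of 0] assms(1,2) by auto
  with roots show ?thesis
    unfolding r1_def[symmetric] r2_def[symmetric] by blast
qed

lemma real_quadratic_roots_separated:
  fixes a b c g :: real
  assumes "a \<noteq> 0" "0 \<le> g" "g\<^sup>2 = b\<^sup>2 - 4*a*c" "2 * \<bar>a\<bar> < b" "2 * \<bar>c\<bar> < b"
  shows "\<bar>(-b + g) / (2*a)\<bar> < 1" "1 < \<bar>(-b - g) / (2*a)\<bar>"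
proof -
  have "\<bar>g - b\<bar> * (g + b) = \<bar>(g - b) * (g + b)\<bar>"
    using assms(2,4) by (simp add: abs_mult)
  also have "\<dots> = 4 * \<bar>a\<bar> * \<bar>c\<bar>"
  proof -
    have "(g - b) * (g + b) = - 4 * a * c"
      using assms(3) by (simp add: algebra_simps power2_eq_square)
    then show ?thesis
      by (simp add: abs_mult)
  qed
  also have "\<dots> < 2 * \<bar>a\<bar> * (g + b)"
    using assms(1,2,5) by simp
  finally have "\<bar>g - b\<bar> < 2 * \<bar>a\<bar>"
    by (rule mult_right_less_imp_less) (use assms(2,4) in linarith)
  then show "\<bar>(-b + g) / (2*a)\<bar> < 1"
    using assms(1) by (simp add: abs_divide abs_mult divide_less_eq)
  show "1 < \<bar>(-b - g) / (2*a)\<bar>"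
    using assms(1,2,4) by (simp add: abs_divide abs_mult less_divide_eq)
qed

lemma continuous_on_csqrt_Re_nonneg: "continuous_on {w. 0 \<le> Re w} csqrt"
proof (rule continuous_at_imp_continuous_on, safe)
  fix w :: complex
  assume "0 \<le> Re w"
  show "isCont csqrt w"
  proof (cases "w = 0")
    case True
    have "((\<lambda>w. sqrt (cmod w)) \<longlongrightarrow> sqrt (cmod (0::complex))) (at 0)"
      by (intro tendsto_intros)
    then have "((\<lambda>w. cmod (csqrt w)) \<longlongrightarrow> 0) (at 0)"
      by simp
    then have "(csqrt \<longlongrightarrow> 0) (at 0)"
      by (rule tendsto_norm_zero_cancel)
    then show ?thesis
      using True by (simp add: isCont_def)
  next
    case False
    then have "w \<notin> \<real>\<^sub>\<le>\<^sub>0"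
      using \<open>0 \<le> Re w\<close> by (auto simp: complex_nonpos_Reals_iff complex_eq_iff)
    then show ?thesis
      by (rule continuous_at_csqrt)
  qed
qed

lemma Re_divide_diff_add_pos:
  fixes d z :: complex
  assumes "cmod d < cmod z"
  shows "0 < Re ((z - d) / (z + d))"
proof -
  have "z + d \<noteq> 0"
    using assms by (metis add_eq_0_iff norm_minus_cancel order_less_irrefl)
  moreover have "Re (z - d) * Re (z + d) + Im (z - d) * Im (z + d) = (cmod z)\<^sup>2 - (cmod d)\<^sup>2"
    unfolding cmod_power2 by (simp add: algebra_simps power2_eq_square)
  moreover have "(cmod d)\<^sup>2 < (cmod z)\<^sup>2"
    using assms by (simp add: power_strict_mono)
  ultimately show ?thesis
    unfolding Re_divide' by (intro divide_pos_pos) auto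
qed

lemma Re_one_minus_divide_nonneg:
  assumes "cmod u \<le> 1" "1 \<le> cmod z"
  shows "0 \<le> Re (1 - u / z)"
proof -
  have "Re (u / z) \<le> cmod (u / z)"
    by (rule complex_Re_le_cmod)
  also have "\<dots> \<le> 1"
    using assms by (simp add: norm_divide divide_le_eq_1)
  finally show ?thesis
    by simp
qed

lemma connected_continuous_less_const:
  fixes f :: "'a::topological_space \<Rightarrow> real"
  assumes "connected S" "continuous_on S f" "\<forall>x\<in>S. f x \<noteq> c"
    and "x0 \<in> S" "f x0 < c" "y \<in> S"
  shows "f y < c"
proof (rule ccontr)
  assume "\<not> f y < c"
  then have "f x0 \<le> c" "c \<le> f y"
    using assms(5) by auto
  moreover have "f x0 \<in> f ` S" "f y \<in> f ` S"
    using assms(4,6) by auto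
  moreover have "connected (f ` S)"
    by (rule connected_continuous_image[OF assms(2,1)])
  ultimately have "c \<in> f ` S"
    unfolding connected_iff_interval by blast
  then show False
    using assms(3) by auto
qed

lemma connected_exterior_diff_countable:
  fixes F :: "complex set"
  assumes "countable F"
  shows "connected ({z. r < cmod z} - F)"
proof -
  have exterior: "{z::complex. r < cmod z} = - cball 0 r"
    by (auto simp: mem_cball)
  show ?thesis
    unfolding exterior using assms
    by (intro connected_open_diff_countable connected_complement_bounded_convex) auto
qed

lemma real_ge_not_in_finite:
  fixes Z :: "'a::real_algebra_1 set"
  assumes "finite Z"
  obtains x where "a \<le> x" "of_real x \<notin> Z"
proof -
  have "finite (of_real -` Z :: real set)"
    using assms inj_of_real by (rule finite_vimageI)
  then have "{a..} - of_real -` Z \<noteq> {}"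
    using infinite_Ici[of a] by (metis Diff_infinite_finite finite.emptyI)
  then show ?thesis
    using that by auto
qed

definition unit_root :: "real \<Rightarrow> complex" where
  "unit_root t = Complex (t/2) (sqrt (1 - t\<^sup>2/4))"

lemma unit_root_add_cnj: "unit_root t + cnj (unit_root t) = of_real t"
  by (simp add: unit_root_def complex_eq_iff)

lemma
  assumes "\<bar>t\<bar> \<le> 2"
  shows norm_unit_root: "cmod (unit_root t) = 1"
    and unit_root_mult_cnj: "unit_root t * cnj (unit_root t) = 1"
proof -
  have "t\<^sup>2 \<le> 2\<^sup>2"
    using abs_le_square_iff[of t 2] assms by simp
  then have "(sqrt (1 - t\<^sup>2/4))\<^sup>2 = 1 - t\<^sup>2/4"
    by simp
  then show norm: "cmod (unit_root t) = 1"
    by (simp add: unit_root_def cmod_def power_divide)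
  show "unit_root t * cnj (unit_root t) = 1"
    using complex_norm_square[of "unit_root t"] norm by simp
qed

text \<open>Here \<open>unit_root t\<close> and its conjugate are the roots of \<open>z\<^sup>2 - t z + 1\<close>; for
  \<open>cmod z \<ge> 1\<close> both arguments of \<open>csqrt\<close> lie in the closed right half-plane, where the
  principal square root is continuous.\<close>
definition quadratic_sqrt :: "real \<Rightarrow> complex \<Rightarrow> complex" where
  "quadratic_sqrt t z = z * csqrt (1 - unit_root t / z) * csqrt (1 - cnj (unit_root t) / z)"

lemma quadratic_sqrt_squared:
  assumes "\<bar>t\<bar> \<le> 2" "z \<noteq> 0"
  shows "(quadratic_sqrt t z)\<^sup>2 = z\<^sup>2 - of_real t * z + 1"
proof -
  have "(quadratic_sqrt t z)\<^sup>2 = z\<^sup>2 * (1 - unit_root t / z) * (1 - cnj (unit_root t) / z)"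
    by (simp add: quadratic_sqrt_def power_mult_distrib)
  also have "\<dots> = (z - unit_root t) * (z - cnj (unit_root t))"
    using assms(2) by (simp add: field_simps power2_eq_square)
  also have "\<dots> = z\<^sup>2 - (unit_root t + cnj (unit_root t)) * z + unit_root t * cnj (unit_root t)"
    by (simp add: algebra_simps power2_eq_square)
  finally show ?thesis
    using assms(1) by (simp add: unit_root_add_cnj unit_root_mult_cnj)
qed

lemma continuous_on_quadratic_sqrt:
  assumes "\<bar>t\<bar> \<le> 2"
  shows "continuous_on {z. 1 \<le> cmod z} (quadratic_sqrt t)"
proof -
  have "continuous_on {z. 1 \<le> cmod z} (\<lambda>z. csqrt (1 - u / z))" if "cmod u = 1" for u
  proof (rule continuous_on_compose2[OF continuous_on_csqrt_Re_nonneg])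
    show "continuous_on {z. 1 \<le> cmod z} (\<lambda>z. 1 - u / z)"
      by (intro continuous_intros) auto
    show "(\<lambda>z. 1 - u / z) ` {z. 1 \<le> cmod z} \<subseteq> {w. 0 \<le> Re w}"
      using Re_one_minus_divide_nonneg that by auto
  qed
  then show ?thesis
    unfolding quadratic_sqrt_def using norm_unit_root[OF assms]
    by (intro continuous_intros) auto
qed

lemma quadratic_sqrt_of_real:
  assumes "\<bar>t\<bar> \<le> 2" "1 \<le> x"
  shows "quadratic_sqrt t (of_real x) = of_real (cmod (of_real x - unit_root t))"
proof -
  define w where "w = 1 - unit_root t / of_real x"
  have "0 \<le> Re w"
    unfolding w_def using assms norm_unit_root[OF assms(1)] by (intro Re_one_minus_divide_nonneg) auto
  then have "csqrt (cnj w) = cnj (csqrt w)"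
    by (cases "w = 0") (auto simp: cnj_csqrt complex_nonpos_Reals_iff complex_eq_iff)
  then have "quadratic_sqrt t (of_real x) = of_real x * (csqrt w * cnj (csqrt w))"
    by (simp add: quadratic_sqrt_def w_def)
  also have "\<dots> = of_real (x * cmod w)"
    by (simp add: complex_norm_square[symmetric])
  also have "x * cmod w = cmod (of_real x * w)"
    using assms(2) by (simp add: norm_mult)
  also have "of_real x * w = of_real x - unit_root t"
    using assms(2) by (simp add: w_def field_simps)
  finally show ?thesis .
qed

definition disc_sigma :: "real \<Rightarrow> real" where
  "disc_sigma C = 4 * (1 - C\<^sup>2) / 3"

text \<open>With \<open>\<sigma> = disc_sigma C\<close>, \<open>t_plus C\<close> and \<open>t_minus C\<close> are the roots of
  \<open>t\<^sup>2 - 2\<sigma> t + \<sigma>\<close>, so that \<open>(z\<^sup>2 - t_plus C z + 1) (z\<^sup>2 - t_minus C z + 1)\<close> is the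
  factor \<open>z\<^sup>4 - 2\<sigma> z\<^sup>3 + (2 + \<sigma>) z\<^sup>2 - 2\<sigma> z + 1\<close> of the discriminant.\<close>
definition t_plus :: "real \<Rightarrow> real" where
  "t_plus C = disc_sigma C + sqrt ((disc_sigma C)\<^sup>2 - disc_sigma C)"

definition t_minus :: "real \<Rightarrow> real" where
  "t_minus C = disc_sigma C - sqrt ((disc_sigma C)\<^sup>2 - disc_sigma C)"

lemma disc_sigma_bounds:
  assumes "\<bar>C\<bar> \<le> 1/2"
  shows "1 \<le> disc_sigma C" "disc_sigma C \<le> 4/3"
proof -
  have "C\<^sup>2 \<le> (1/2)\<^sup>2"
    using abs_le_square_iff[of C "1/2"] assms by simp
  then show "1 \<le> disc_sigma C" "disc_sigma C \<le> 4/3"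
    by (auto simp: disc_sigma_def power_divide)
qed

lemma
  assumes "\<bar>C\<bar> \<le> 1/2"
  shows abs_t_plus_le: "\<bar>t_plus C\<bar> \<le> 2"
    and abs_t_minus_le: "\<bar>t_minus C\<bar> \<le> 2"
proof -
  define s where "s = disc_sigma C"
  have s: "1 \<le> s" "s \<le> 4/3"
    unfolding s_def using disc_sigma_bounds[OF assms] by auto
  have "0 \<le> sqrt (s\<^sup>2 - s)"
    using s by (simp add: power2_eq_square)
  moreover have "sqrt (s\<^sup>2 - s) \<le> s"
    using s real_sqrt_le_mono[of "s\<^sup>2 - s" "s\<^sup>2"] by simp
  moreover have "s\<^sup>2 - s \<le> (2 - s)\<^sup>2"
    using s by (simp add: power2_eq_square algebra_simps)
  then have "sqrt (s\<^sup>2 - s) \<le> 2 - s"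
    using s real_sqrt_le_mono by fastforce
  ultimately show "\<bar>t_plus C\<bar> \<le> 2" "\<bar>t_minus C\<bar> \<le> 2"
    unfolding t_plus_def t_minus_def s_def[symmetric] abs_le_iff using s by linarith+
qed

lemma t_plus_add_t_minus: "t_plus C + t_minus C = 2 * disc_sigma C"
  by (simp add: t_plus_def t_minus_def)

lemma t_plus_mult_t_minus:
  assumes "\<bar>C\<bar> \<le> 1/2"
  shows "t_plus C * t_minus C = disc_sigma C"
proof -
  have "0 \<le> (disc_sigma C)\<^sup>2 - disc_sigma C"
    using disc_sigma_bounds[OF assms] by (simp add: power2_eq_square)
  then show ?thesis
    by (simp add: t_plus_def t_minus_def algebra_simps power2_eq_square)
qed

lemma discriminant_factorization:
  assumes "\<bar>C\<bar> \<le> 1/2"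
  shows "(d_0 C z)\<^sup>2 - 4 * d_1 C z * d_m1 C z
    = (z + 1)\<^sup>2 * (z\<^sup>2 - of_real (t_plus C) * z + 1) * (z\<^sup>2 - of_real (t_minus C) * z + 1)"
proof -
  define s where "s = disc_sigma C"
  have "(d_0 C z)\<^sup>2 - 4 * d_1 C z * d_m1 C z
      = (z + 1)\<^sup>2 * (z^4 - 2 * of_real s * z^3 + (2 + of_real s) * z\<^sup>2 - 2 * of_real s * z + 1)"
    by (simp add: d_0_def d_1_def d_m1_def s_def disc_sigma_def field_simps
        power2_eq_square power3_eq_cube power4_eq_xxxx)
  also have "\<dots> = (z + 1)\<^sup>2 * (z^4 - of_real (t_plus C + t_minus C) * z^3
      + (2 + of_real (t_plus C * t_minus C)) * z\<^sup>2 - of_real (t_plus C + t_minus C) * z + 1)"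
    unfolding t_plus_add_t_minus t_plus_mult_t_minus[OF assms] s_def by simp
  also have "\<dots> = (z + 1)\<^sup>2 * (z\<^sup>2 - of_real (t_plus C) * z + 1) * (z\<^sup>2 - of_real (t_minus C) * z + 1)"
    by (simp add: algebra_simps power2_eq_square power3_eq_cube power4_eq_xxxx)
  finally show ?thesis .
qed

definition disc_sqrt :: "real \<Rightarrow> complex \<Rightarrow> complex" where
  "disc_sqrt C z = (z + 1) * quadratic_sqrt (t_plus C) z * quadratic_sqrt (t_minus C) z"

lemma disc_sqrt_squared:
  assumes "\<bar>C\<bar> \<le> 1/2" "z \<noteq> 0"
  shows "(disc_sqrt C z)\<^sup>2 = (d_0 C z)\<^sup>2 - 4 * d_1 C z * d_m1 C z"
  using assms
  by (simp add: disc_sqrt_def power_mult_distrib quadratic_sqrt_squared abs_t_plus_le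
      abs_t_minus_le discriminant_factorization)

lemma continuous_on_disc_sqrt:
  assumes "\<bar>C\<bar> \<le> 1/2"
  shows "continuous_on {z. 1 \<le> cmod z} (disc_sqrt C)"
  unfolding disc_sqrt_def using assms
  by (intro continuous_intros continuous_on_quadratic_sqrt abs_t_plus_le abs_t_minus_le)

lemma disc_sqrt_of_real_nonneg:
  assumes "\<bar>C\<bar> \<le> 1/2" "1 \<le> x"
  obtains g where "0 \<le> g" "disc_sqrt C (of_real x) = of_real g"
proof
  show "disc_sqrt C (of_real x) = of_real ((x + 1) * cmod (of_real x - unit_root (t_plus C))
      * cmod (of_real x - unit_root (t_minus C)))"
    using assms
    by (simp add: disc_sqrt_def quadratic_sqrt_of_real abs_t_plus_le abs_t_minus_le)
qed (use assms(2) in simp)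

lemma char_fun_decomposition:
  assumes "k \<noteq> 0"
  shows "d_m1 C z * inverse k + d_0 C z + d_1 C z * k
    = of_real ((2 - 2*C\<^sup>2) / 3) * ((z - 1) * (z + 1/k) * (z + k))
      + of_real ((2*C + 1) * (C + 1) / 6) * ((z - 1/k) * (z + 1) * (z + k))
      + of_real ((2*C - 1) * (C - 1) / 6) * ((z - k) * (z + 1) * (z + 1/k))"
  using assms
  by (simp add: d_0_def d_1_def d_m1_def field_simps power2_eq_square power3_eq_cube)

lemma no_char_root_on_unit_circle:
  assumes "\<bar>C\<bar> \<le> 1/2" "1 < cmod z" "cmod k = 1"
  shows "\<not> char_root C z k"
proof
  assume "char_root C z k"
  then have root: "d_m1 C z * inverse k + d_0 C z + d_1 C z * k = 0"
    unfolding char_root_def by simp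
  have k: "k \<noteq> 0" "cmod (1/k) = 1"
    using assms(3) by (auto simp: norm_divide)
  define w where "w d = (z - d) / (z + d)" for d
  have cayley: "0 < Re (w d)" and nz: "z + d \<noteq> 0" if "cmod d = 1" for d
    using Re_divide_diff_add_pos[of d z] assms(2) that by (auto simp: w_def)
  define P where "P = (z + 1) * (z + 1/k) * (z + k)"
  have "P \<noteq> 0"
    unfolding P_def using nz[of 1] nz[OF k(2)] nz[OF assms(3)] by simp
  have w: "P * w 1 = (z - 1) * (z + 1/k) * (z + k)" "P * w (1/k) = (z - 1/k) * (z + 1) * (z + k)"
    "P * w k = (z - k) * (z + 1) * (z + 1/k)"
    unfolding P_def w_def using nz[of 1] nz[OF k(2)] nz[OF assms(3)] by simp_all
  define p1 p2 p3 where p1_def: "p1 = (2 - 2*C\<^sup>2) / 3" and p2_def: "p2 = (2*C + 1) * (C + 1) / 6"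
    and p3_def: "p3 = (2*C - 1) * (C - 1) / 6"
  have "C\<^sup>2 \<le> (1/2)\<^sup>2" "-1/2 \<le> C" "C \<le> 1/2"
    using abs_le_square_iff[of C "1/2"] assms(1) by auto
  then have p: "0 < p1" "0 \<le> p2" "0 \<le> p3"
    unfolding p1_def p2_def p3_def by (auto simp: power_divide intro!: mult_nonneg_nonneg mult_nonpos_nonpos)
  define S where "S = of_real p1 * w 1 + of_real p2 * w (1/k) + of_real p3 * w k"
  have "P * S = of_real p1 * (P * w 1) + of_real p2 * (P * w (1/k)) + of_real p3 * (P * w k)"
    unfolding S_def by (simp add: algebra_simps)
  also have "\<dots> = 0"
    unfolding w p1_def p2_def p3_def using root char_fun_decomposition[OF k(1), of C z] by simp
  finally have "S = 0"
    using \<open>P \<noteq> 0\<close> by simp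
  moreover have "Re S = p1 * Re (w 1) + p2 * Re (w (1/k)) + p3 * Re (w k)"
    by (simp add: S_def)
  moreover have "\<dots> > 0"
    using p cayley[of 1] cayley[OF k(2)] cayley[OF assms(3)]
    by (intro add_pos_nonneg mult_pos_pos mult_nonneg_nonneg) auto
  ultimately show False
    by simp
qed

lemma d_1_factor: "d_1 C z = z * (of_real ((2*C - 1) * (C + 2) / 3) - of_real ((2*C + 1) * (C - 2) / 3) * z)"
  by (simp add: d_1_def field_simps power2_eq_square)

lemma d_m1_factor: "d_m1 C z = z * (of_real ((2*C + 1) * (C - 2) / 3) - of_real ((2*C - 1) * (C + 2) / 3) * z)"
  by (simp add: d_m1_def field_simps power2_eq_square)

lemma finite_d_pm1_zeros: "finite {z. d_m1 C z = 0 \<or> d_1 C z = 0}"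
proof -
  have zeros: "z \<in> {0, of_real (\<alpha> / \<beta>)}"
    if "z * (of_real \<alpha> - of_real \<beta> * z) = 0" "\<alpha> \<noteq> 0 \<or> \<beta> \<noteq> 0" for z :: complex and \<alpha> \<beta> :: real
  proof (cases "z = 0")
    case False
    then have "of_real \<beta> * z = of_real \<alpha>"
      using that(1) by simp
    moreover from this have "\<beta> \<noteq> 0"
      using that(2) by auto
    ultimately show ?thesis
      by (simp add: field_simps)
  qed simp
  define a b where a_def: "a = (2*C - 1) * (C + 2) / 3" and b_def: "b = (2*C + 1) * (C - 2) / 3"
  have "d_1 C z = z * (of_real a - of_real b * z)" "d_m1 C z = z * (of_real b - of_real a * z)" for z
    unfolding a_def b_def by (rule d_1_factor d_m1_factor)+
  moreover have "a \<noteq> 0 \<or> b \<noteq> 0"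
    unfolding a_def b_def by auto
  ultimately have "{z. d_m1 C z = 0 \<or> d_1 C z = 0} \<subseteq> {0, of_real (a / b), of_real (b / a)}"
    using zeros[of _ a b] zeros[of _ b a] by auto
  then show ?thesis
    by (rule finite_subset) simp
qed

definition kappa_s :: "real \<Rightarrow> complex \<Rightarrow> complex" where
  "kappa_s C z = (- d_0 C z + disc_sqrt C z) / (2 * d_1 C z)"

definition kappa_u :: "real \<Rightarrow> complex \<Rightarrow> complex" where
  "kappa_u C z = (- d_0 C z - disc_sqrt C z) / (2 * d_1 C z)"

lemma char_root_set:
  assumes "\<bar>C\<bar> \<le> 1/2" "z \<noteq> 0" "d_m1 C z \<noteq> 0" "d_1 C z \<noteq> 0"
  shows "{\<kappa>. char_root C z \<kappa>} = {kappa_s C z, kappa_u C z}"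
  unfolding char_root_def kappa_s_def kappa_u_def
  using quadratic_roots_inverse_form[OF assms(4,3) disc_sqrt_squared[OF assms(1,2)]]
  by (simp add: mult.commute)

lemma continuous_on_kappa:
  assumes "\<bar>C\<bar> \<le> 1/2"
  defines "S \<equiv> {z. 1 \<le> cmod z} - {z. d_m1 C z = 0 \<or> d_1 C z = 0}"
  shows "continuous_on S (kappa_s C)" "continuous_on S (kappa_u C)"
proof -
  have "continuous_on S (disc_sqrt C)"
    by (rule continuous_on_subset[OF continuous_on_disc_sqrt[OF assms(1)]]) (auto simp: S_def)
  moreover have "continuous_on S (d_0 C)" "continuous_on S (d_1 C)"
    unfolding d_0_def[abs_def] d_1_def[abs_def] by (intro continuous_intros)+
  ultimately show "continuous_on S (kappa_s C)" "continuous_on S (kappa_u C)"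
    unfolding kappa_s_def[abs_def] kappa_u_def[abs_def]
    by (auto intro!: continuous_intros simp: S_def)
qed

lemma d_of_real:
  "d_0 C (of_real x) = of_real ((x - 1) * (x\<^sup>2 + (4*C\<^sup>2 + 2) / 3 * x + 1))"
  "d_1 C (of_real x) = of_real (x * ((2*C - 1) * (C + 2) / 3 - (2*C + 1) * (C - 2) / 3 * x))"
  "d_m1 C (of_real x) = of_real (x * ((2*C + 1) * (C - 2) / 3 - (2*C - 1) * (C + 2) / 3 * x))"
  by (simp_all add: d_0_def d_1_factor d_m1_factor field_simps power2_eq_square power3_eq_cube)

lemma d_0_dominates_d_pm1:
  assumes "\<bar>C\<bar> \<le> 1/2" "4 \<le> x"
  shows "2 * cmod (d_1 C (of_real x)) < Re (d_0 C (of_real x))"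
    and "2 * cmod (d_m1 C (of_real x)) < Re (d_0 C (of_real x))"
proof -
  define a b where a_def: "a = (2*C - 1) * (C + 2) / 3" and b_def: "b = (2*C + 1) * (C - 2) / 3"
  have "-1/2 \<le> C" "C \<le> 1/2"
    using assms(1) by auto
  then have ab: "a \<le> 0" "b \<le> 0"
    unfolding a_def b_def
    by (simp_all add: divide_nonpos_pos mult_nonpos_nonneg mult_nonneg_nonpos)
  have "-(a + b) = 4/3 - 4/3 * C\<^sup>2"
    unfolding a_def b_def by (simp add: field_simps power2_eq_square)
  then have ab_sum: "-(a + b) \<le> 4/3"
    by simp
  have x: "0 \<le> x" "x \<le> x\<^sup>2"
    using assms(2) by (auto simp: power2_eq_square)
  have bound: "2 * \<bar>x * (p - q * x)\<bar> \<le> 8/3 * x\<^sup>2" if "p \<le> 0" "q \<le> 0" "-(p + q) \<le> 4/3" for p q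
  proof -
    have "p * x \<le> 0" "q * x\<^sup>2 \<le> 0"
      using that x by (simp_all add: mult_nonpos_nonneg)
    then have "\<bar>x * (p - q * x)\<bar> \<le> - p * x - q * x\<^sup>2"
      by (simp add: abs_le_iff algebra_simps power2_eq_square)
    also have "\<dots> \<le> -(p + q) * x\<^sup>2"
      using that x by (simp add: algebra_simps mult_left_mono_neg)
    also have "\<dots> \<le> 4/3 * x\<^sup>2"
      using that by (intro mult_right_mono) auto
    finally show ?thesis
      by simp
  qed
  have "2 * cmod (d_1 C (of_real x)) \<le> 8/3 * x\<^sup>2" "2 * cmod (d_m1 C (of_real x)) \<le> 8/3 * x\<^sup>2"
    unfolding d_of_real a_def[symmetric] b_def[symmetric] norm_of_real
    using bound[OF ab ab_sum] bound[OF ab(2,1) ab_sum[unfolded add.commute[of a b]]] by simp_all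
  moreover have "3 * x\<^sup>2 \<le> Re (d_0 C (of_real x))"
    unfolding d_of_real Re_complex_of_real using assms(2) by (intro mult_mono) auto
  moreover have "0 < x\<^sup>2"
    using assms(2) by simp
  ultimately show "2 * cmod (d_1 C (of_real x)) < Re (d_0 C (of_real x))"
    and "2 * cmod (d_m1 C (of_real x)) < Re (d_0 C (of_real x))"
    by linarith+
qed

lemma kappa_separated_at_large_real:
  assumes "\<bar>C\<bar> \<le> 1/2" "4 \<le> x" "d_1 C (of_real x) \<noteq> 0"
  shows "cmod (kappa_s C (of_real x)) < 1" "1 < cmod (kappa_u C (of_real x))"
proof -
  define a b c where a_def: "a = Re (d_1 C (of_real x))" and b_def: "b = Re (d_0 C (of_real x))"
    and c_def: "c = Re (d_m1 C (of_real x))"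
  have real: "d_1 C (of_real x) = of_real a" "d_0 C (of_real x) = of_real b"
    "d_m1 C (of_real x) = of_real c"
    unfolding a_def b_def c_def d_of_real by simp_all
  obtain g where g: "0 \<le> g" "disc_sqrt C (of_real x) = of_real g"
    using disc_sqrt_of_real_nonneg[OF assms(1), of x] assms(2) by auto
  have "of_real (g\<^sup>2) = (of_real (b\<^sup>2 - 4*a*c) :: complex)"
    using disc_sqrt_squared[OF assms(1), of "of_real x"] assms(2) unfolding g(2) real by simp
  then have "g\<^sup>2 = b\<^sup>2 - 4*a*c"
    by (simp only: of_real_eq_iff)
  moreover have "2 * \<bar>a\<bar> < b" "2 * \<bar>c\<bar> < b"
    using d_0_dominates_d_pm1[OF assms(1,2)] unfolding real by simp_all
  moreover have "a \<noteq> 0"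
    using assms(3) real by simp
  ultimately have "\<bar>(-b + g) / (2*a)\<bar> < 1" "1 < \<bar>(-b - g) / (2*a)\<bar>"
    using real_quadratic_roots_separated g(1) by blast+
  moreover have "kappa_s C (of_real x) = of_real ((-b + g) / (2*a))"
    "kappa_u C (of_real x) = of_real ((-b - g) / (2*a))"
    unfolding kappa_s_def kappa_u_def real g(2) by simp_all
  ultimately show "cmod (kappa_s C (of_real x)) < 1" "1 < cmod (kappa_u C (of_real x))"
    by (simp_all only: norm_of_real)
qed

lemma kappa_s_stable_kappa_u_unstable:
  assumes "\<bar>C\<bar> \<le> 1/2" "1 < cmod z" "d_m1 C z \<noteq> 0" "d_1 C z \<noteq> 0"
  shows "cmod (kappa_s C z) < 1" "1 < cmod (kappa_u C z)"
proof -
  define Z where "Z = {z. d_m1 C z = 0 \<or> d_1 C z = 0}"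
  define \<Omega> where "\<Omega> = {z. 1 < cmod z} - Z"
  have conn: "connected \<Omega>"
    unfolding \<Omega>_def Z_def using finite_d_pm1_zeros
    by (intro connected_exterior_diff_countable countable_finite)
  have cont: "continuous_on \<Omega> (kappa_s C)" "continuous_on \<Omega> (kappa_u C)"
    using continuous_on_kappa[OF assms(1)]
    by (auto elim!: continuous_on_subset simp: \<Omega>_def Z_def)
  have off_circle: "cmod \<kappa> \<noteq> 1" if "w \<in> \<Omega>" "\<kappa> \<in> {kappa_s C w, kappa_u C w}" for w \<kappa>
  proof -
    have "1 < cmod w" "w \<noteq> 0" "d_m1 C w \<noteq> 0" "d_1 C w \<noteq> 0"
      using that(1) by (auto simp: \<Omega>_def Z_def)
    then show ?thesis
      using char_root_set[OF assms(1)] no_char_root_on_unit_circle[OF assms(1)] that(2) by blast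
  qed
  obtain x where x: "4 \<le> x" "of_real x \<notin> Z"
    using finite_d_pm1_zeros unfolding Z_def by (rule real_ge_not_in_finite)
  then have x_in: "of_real x \<in> \<Omega>" and "d_1 C (of_real x) \<noteq> 0"
    by (auto simp: \<Omega>_def Z_def)
  note reference = kappa_separated_at_large_real[OF assms(1) x(1) this(2)]
  have z_in: "z \<in> \<Omega>"
    using assms(2-4) by (simp add: \<Omega>_def Z_def)
  show "cmod (kappa_s C z) < 1"
    using off_circle reference(1)
    by (intro connected_continuous_less_const[OF conn continuous_on_norm[OF cont(1)] _ x_in _ z_in]) auto
  have "- cmod (kappa_u C z) < -1"
    using off_circle reference(2)
    by (intro connected_continuous_less_const[OF conn continuous_on_minus[OF continuous_on_norm[OF cont(2)]] _ x_in _ z_in]) auto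
  then show "1 < cmod (kappa_u C z)"
    by simp
qed

lemma kappa_at_1:
  assumes "C \<noteq> 0" "\<bar>C\<bar> \<le> 1/2"
  shows "kappa_s C 1 = (if C < 0 then -1 else 1)" "kappa_u C 1 = (if C < 0 then 1 else -1)"
proof -
  have d: "d_0 C 1 = 0" "d_1 C 1 = of_real (2*C)" "d_m1 C 1 = - of_real (2*C)"
    by (simp_all add: d_0_def d_1_def d_m1_def field_simps)
  obtain g where g: "0 \<le> g" "disc_sqrt C 1 = of_real g"
    using disc_sqrt_of_real_nonneg[OF assms(2), of 1] by auto
  have "of_real (g\<^sup>2) = (of_real ((4 * \<bar>C\<bar>)\<^sup>2) :: complex)"
    using disc_sqrt_squared[OF assms(2), of 1] unfolding g(2) d by (simp add: power2_eq_square)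
  then have "g = 4 * \<bar>C\<bar>"
    using g(1) by (simp only: of_real_eq_iff power2_eq_iff_nonneg)
  then show "kappa_s C 1 = (if C < 0 then -1 else 1)" "kappa_u C 1 = (if C < 0 then 1 else -1)"
    using assms(1) unfolding kappa_s_def kappa_u_def d g(2) by auto
qed

lemma kappa_at_minus_1:
  assumes "\<bar>C\<bar> \<le> 1/2"
  shows "kappa_s C (-1) = 1" "kappa_u C (-1) = 1"
proof -
  have "C\<^sup>2 \<le> (1/2)\<^sup>2"
    using abs_le_square_iff[of C "1/2"] assms by simp
  then have "4 * (1 - C\<^sup>2) / 3 \<noteq> 0"
    by (simp add: power_divide)
  moreover have "d_1 C (-1) = of_real (4 * (1 - C\<^sup>2) / 3)"
    by (simp add: d_1_def field_simps)
  ultimately have "d_1 C (-1) \<noteq> 0"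
    by (metis of_real_eq_0_iff)
  moreover have "d_0 C (-1) = - 2 * d_1 C (-1)"
    by (simp add: d_0_def d_1_def field_simps)
  moreover have "disc_sqrt C (-1) = 0"
    by (simp add: disc_sqrt_def)
  ultimately show "kappa_s C (-1) = 1" "kappa_u C (-1) = 1"
    unfolding kappa_s_def kappa_u_def by simp_all
qed

theorem mainTheorem11:
  fixes C :: real
  assumes "0 < \<bar>C\<bar>" and "\<bar>C\<bar> \<le> 1/2"
  shows "\<exists>\<kappa>s \<kappa>u :: complex \<Rightarrow> complex.
     (\<forall>z. 1 < cmod z \<and> d_m1 C z \<noteq> 0 \<and> d_1 C z \<noteq> 0 \<longrightarrow>
          cmod (\<kappa>s z) < 1 \<and> 1 < cmod (\<kappa>u z) \<and>
          {\<kappa>. char_root C z \<kappa>} = {\<kappa>s z, \<kappa>u z})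
   \<and> continuous_on ({z. 1 \<le> cmod z} - {z. d_m1 C z = 0 \<or> d_1 C z = 0}) \<kappa>s
   \<and> continuous_on ({z. 1 \<le> cmod z} - {z. d_m1 C z = 0 \<or> d_1 C z = 0}) \<kappa>u
   \<and> \<kappa>s 1 = (if C < 0 then -1 else 1)
   \<and> \<kappa>u 1 = (if C < 0 then 1 else -1)
   \<and> \<kappa>s (-1) = 1 \<and> \<kappa>u (-1) = 1"
proof (intro exI conjI allI impI)
  fix z :: complex
  assume z: "1 < cmod z \<and> d_m1 C z \<noteq> 0 \<and> d_1 C z \<noteq> 0"
  then have "z \<noteq> 0"
    by auto
  with z show "cmod (kappa_s C z) < 1" "1 < cmod (kappa_u C z)"
    and "{\<kappa>. char_root C z \<kappa>} = {kappa_s C z, kappa_u C z}"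
    using kappa_s_stable_kappa_u_unstable[OF assms(2)] char_root_set[OF assms(2)] by auto
qed (use continuous_on_kappa[OF assms(2)] kappa_at_1[OF _ assms(2)] kappa_at_minus_1[OF assms(2)]
      assms(1) in auto)

end
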